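(* Let $T\subseteq\mathbb{R}^n$ be an action set. Then $\mathbf{T}(\mathbf{W}(T))=T$, where $\mathbf{W}(T)=\bigcap_{t\in T}\mathbf{W}(t)$ and $\mathbf{T}(W)=\bigcap_{w\in W}\mathbf{T}(w)$.
   Context: Single-commodity network pricing setting: $G=(\mathcal{V},\mathcal{A})$ directed graph, arc costs $c\ge0$, nonempty tolled arc set $\mathcal{A}_1\subsetneq\mathcal{A}$, $n=|\mathcal{A}_1|$, $N$ node–arc incidence matrix, single origin $o$ and destination $d$ connected by a toll-free path, $b_o=1$, $b_d=-1$, $b_i=0$ otherwise, $\mathcal{X}=\{x\in\mathbb{R}^{\mathcal{A}}: Nx=b,\ x\ge0\}$, $x_{\mathcal{A}_1}$ the restriction of $x$ to $\mathcal{A}_1$; tolls $t\in\mathbb{R}^n$ are extended by zeros to $\bar t\in\mathbb{R}^{\mathcal{A}}$. Let $f(t)=\min\{c^\top x+t^\top x_{\mathcal{A}_1}: x\in\mathcal{X}\}$ for $t\ge0$, $f(t)=-\infty$ otherwise. An action set is a set $T=\{t:(t,z)\in F\text{ for some }z\}$ where $F$ is a face of $\operatorname{epi}(-f)$ whose affine hull's direction space does not contain $(0,1)$. For $t\ge0$, $\mathbf{W}(t)$ is the set of $w$ such that $(w,x)$ is optimal for some $x$ in $\min_{w,x}\{c^\top x+t^\top w: x_{\mathcal{A}_1}\le w,\ Nx=b,\ w\ge0,\ x\ge0\}$. For $w\in\mathbb{R}^n$, $w\ge0$, $\mathbf{T}(w)$ is the set of $t$ that are parts of optimal solutions $(t,y)$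 of $\max_{t,y}\{b^\top y-w^\top t: N^\top y-\bar t\le c,\ t\ge0\}$. *)

theory Defs
  imports "HOL-Analysis.Analysis"
begin

text \<open>Tolled arcs are indexed by the finite type 't via an
 injective map e (so A1 = range e and n = CARD('t)).\<close>

definition bvec :: "'v::finite \<Rightarrow> 'v \<Rightarrow> real^'v" where
  "bvec orig dest = (\<chi> i. if i = orig then 1 else if i = dest then -1 else 0)"

definition incid :: "('a::finite \<Rightarrow> 'v::finite) \<Rightarrow> ('a \<Rightarrow> 'v) \<Rightarrow> real^'a \<Rightarrow> real^'v" where
  "incid src tgt x = (\<chi> i. (\<Sum>a\<in>{a. src a = i}. x$a) - (\<Sum>a\<in>{a. tgt a = i}. x$a))"

definition restr :: "('t::finite \<Rightarrow> 'a::finite) \<Rightarrow> real^'a \<Rightarrow> real^'t" where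
  "restr e x = (\<chi> i. x $ e i)"

definition tbar :: "('t::finite \<Rightarrow> 'a::finite) \<Rightarrow> real^'t \<Rightarrow> real^'a" where
  "tbar e t = (\<chi> a. if a \<in> range e then t $ (inv e a) else 0)"

definition nonneg :: "real^'n \<Rightarrow> bool" where
  "nonneg v \<longleftrightarrow> (\<forall>i. 0 \<le> v $ i)"

definition Xset :: "('a::finite \<Rightarrow> 'v::finite) \<Rightarrow> ('a \<Rightarrow> 'v) \<Rightarrow> 'v \<Rightarrow> 'v \<Rightarrow> (real^'a) set" where
  "Xset src tgt orig dest = {x. incid src tgt x = bvec orig dest \<and> nonneg x}"

text \<open>f(t) for t >= 0 (the minimum, written as an infimum); f(t) = -infinity otherwise,
 which is encoded in the definition of the epigraph of -f below.\<close>
definition fval :: "('a::finite \<Rightarrow> 'v::finite) \<Rightarrow> ('a \<Rightarrow> 'v) \<Rightarrow> real^'a \<Rightarrow> ('t::finite \<Rightarrow> 'a) \<Rightarrow> 'v \<Rightarrow> 'v \<Rightarrow> real^'t \<Rightarrow> real" where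
  "fval src tgt c e orig dest t =
     Inf {c \<bullet> x + t \<bullet> restr e x | x. x \<in> Xset src tgt orig dest}"

text \<open>epi(-f) = {(t,z). -f(t) <= z}; since -f(t) = +infinity unless t >= 0.\<close>
definition epi_negf :: "('a::finite \<Rightarrow> 'v::finite) \<Rightarrow> ('a \<Rightarrow> 'v) \<Rightarrow> real^'a \<Rightarrow> ('t::finite \<Rightarrow> 'a) \<Rightarrow> 'v \<Rightarrow> 'v \<Rightarrow> ((real^'t) \<times> real) set" where
  "epi_negf src tgt c e orig dest =
     {(t, z). nonneg t \<and> - fval src tgt c e orig dest t \<le> z}"

definition action_set :: "('a::finite \<Rightarrow> 'v::finite) \<Rightarrow> ('a \<Rightarrow> 'v) \<Rightarrow> real^'a \<Rightarrow> ('t::finite \<Rightarrow> 'a) \<Rightarrow> 'v \<Rightarrow> 'v \<Rightarrow> (real^'t) set \<Rightarrow> bool" where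
  "action_set src tgt c e orig dest T \<longleftrightarrow>
     (\<exists>F. F face_of epi_negf src tgt c e orig dest \<and> F \<noteq> {} \<and>
          ((0::real^'t), (1::real)) \<notin> {u - v | u v. u \<in> affine hull F \<and> v \<in> affine hull F} \<and>
          T = {t. \<exists>z. (t, z) \<in> F})"

definition lpW_feas :: "('a::finite \<Rightarrow> 'v::finite) \<Rightarrow> ('a \<Rightarrow> 'v) \<Rightarrow> ('t::finite \<Rightarrow> 'a) \<Rightarrow> 'v \<Rightarrow> 'v \<Rightarrow> real^'t \<Rightarrow> real^'a \<Rightarrow> bool" where
  "lpW_feas src tgt e orig dest w x \<longleftrightarrow>
     (\<forall>i. x $ e i \<le> w $ i) \<and> incid src tgt x = bvec orig dest \<and> nonneg w \<and> nonneg x"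

definition Wt :: "('a::finite \<Rightarrow> 'v::finite) \<Rightarrow> ('a \<Rightarrow> 'v) \<Rightarrow> real^'a \<Rightarrow> ('t::finite \<Rightarrow> 'a) \<Rightarrow> 'v \<Rightarrow> 'v \<Rightarrow> real^'t \<Rightarrow> (real^'t) set" where
  "Wt src tgt c e orig dest t =
     {w. \<exists>x. lpW_feas src tgt e orig dest w x \<and>
           (\<forall>w' x'. lpW_feas src tgt e orig dest w' x' \<longrightarrow> c \<bullet> x + t \<bullet> w \<le> c \<bullet> x' + t \<bullet> w')}"

text \<open>Dual LP  max b y - w t  s.t. N^T y - tbar <= c, t >= 0;  (N^T y)_a = y_tail - y_head.\<close>
definition lpT_feas :: "('a::finite \<Rightarrow> 'v::finite) \<Rightarrow> ('a \<Rightarrow> 'v) \<Rightarrow> real^'a \<Rightarrow> ('t::finite \<Rightarrow> 'a) \<Rightarrow> real^'t \<Rightarrow> real^'v \<Rightarrow> bool" where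
  "lpT_feas src tgt c e t y \<longleftrightarrow>
     (\<forall>a. y $ src a - y $ tgt a - tbar e t $ a \<le> c $ a) \<and> nonneg t"

definition Tw :: "('a::finite \<Rightarrow> 'v::finite) \<Rightarrow> ('a \<Rightarrow> 'v) \<Rightarrow> real^'a \<Rightarrow> ('t::finite \<Rightarrow> 'a) \<Rightarrow> 'v \<Rightarrow> 'v \<Rightarrow> real^'t \<Rightarrow> (real^'t) set" where
  "Tw src tgt c e orig dest w =
     {t. \<exists>y. lpT_feas src tgt c e t y \<and>
           (\<forall>t' y'. lpT_feas src tgt c e t' y' \<longrightarrow>
               bvec orig dest \<bullet> y' - w \<bullet> t' \<le> bvec orig dest \<bullet> y - w \<bullet> t)}"

definition walk_in :: "('a \<Rightarrow> 'v) \<Rightarrow> ('a \<Rightarrow> 'v) \<Rightarrow> 'a set \<Rightarrow> 'v \<Rightarrow> 'v \<Rightarrow> bool" where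
  "walk_in src tgt S u v \<longleftrightarrow>
     (\<exists>as. as \<noteq> [] \<and> src (hd as) = u \<and> tgt (last as) = v \<and> set as \<subseteq> S \<and>
        (\<forall>k. Suc k < length as \<longrightarrow> tgt (as ! k) = src (as ! Suc k)))"

end

theory Submission
  imports Defs
begin

(* For tolls t \<ge> 0, f t is the least tolled cost (c + tbar t) \<bullet> p of a short orig-dest path p,
   hence a minimum of finitely many affine functions, and shortest-walk potentials give matching
   dual solutions.  A non-vertical face F of epi(-f) is the graph of -f over its projection T, so
   T is convex and f is affine on it.  Choose t0 in T of maximal support (non-optimal paths and
   nonzero tolls): paths optimal at t0 are optimal on all of T, and tolls vanishing at t0 vanish
   on T.  So the restriction to the tolled arcs of a path optimal at t0, also when raised at a
   toll vanishing at t0, lies in W(T).  Testing the dual optimality of s \<in> T(W(T)) against these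
   vectors shows that s keeps the optimal paths and the zero tolls of t0.  Hence the segment from
   s through t0 extends beyond t0 keeping an optimal path, (t0, -f t0) is interior to a segment
   of epi(-f) ending in (s, -f s), and the face property gives s \<in> T.  The inclusion
   T \<subseteq> T(W(T)) is LP duality. *)

lemma nonneg_inner_mono:
  fixes t x y :: "real^'n"
  shows "nonneg t \<Longrightarrow> (\<forall>i. x $ i \<le> y $ i) \<Longrightarrow> t \<bullet> x \<le> t \<bullet> y"
  unfolding inner_vec_def nonneg_def by (auto intro!: sum_mono mult_left_mono)

lemma nonneg_inner_nonneg: "nonneg t \<Longrightarrow> nonneg x \<Longrightarrow> 0 \<le> t \<bullet> x"
  using nonneg_inner_mono[of t 0 x] by (simp add: nonneg_def)

lemma face_of_epigraph_nonvertical: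
  fixes g :: "'n::real_vector \<Rightarrow> real"
  assumes F: "F face_of {(t, z). P t \<and> g t \<le> z}"
    and nonvertical: "((0::'n), (1::real)) \<notin> {u - v | u v. u \<in> affine hull F \<and> v \<in> affine hull F}"
    and tz: "(t, z) \<in> F"
  shows "z = g t"
proof (rule ccontr)
  assume "z \<noteq> g t"
  moreover have "P t" "g t \<le> z" using face_of_imp_subset[OF F] tz by auto
  ultimately have d: "0 < z - g t" by simp
  define A where "A = (t, g t)"
  define B where "B = (t, z + (z - g t))"
  have "A \<noteq> B" using d by (simp add: A_def B_def)
  moreover have "(t, z) = (1 - 1/2) *\<^sub>R A + (1/2) *\<^sub>R B"
    by (simp add: A_def B_def flip: scaleR_add_left) (simp add: field_simps)
  ultimately have "(t, z) \<in> open_segment A B"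
    unfolding in_segment by (intro conjI exI[of _ "1/2"]) auto
  then have AF: "A \<in> F" and BF: "B \<in> F"
    using face_ofD[OF F _ _ _ tz] \<open>P t\<close> d by (auto simp: A_def B_def)
  define s where "s = 1 / (2 * (z - g t))"
  have "(1 - s) *\<^sub>R A + s *\<^sub>R B \<in> affine hull F"
    using AF BF by (intro mem_affine[OF affine_affine_hull]) (auto intro: hull_inc)
  moreover have "A \<in> affine hull F" using AF by (auto intro: hull_inc)
  moreover have "(1 - s) *\<^sub>R A + s *\<^sub>R B - A = s *\<^sub>R (B - A)"
    by (simp add: algebra_simps)
  moreover have "s *\<^sub>R (B - A) = (0, 1)"
    using d by (simp add: A_def B_def s_def field_simps)
  ultimately show False using nonvertical by (metis (mono_tags, lifting) mem_Collect_eq)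
qed

lemma exists_greatest_union_closed:
  assumes "finite U" "\<forall>x\<in>A. S x \<subseteq> U" "A \<noteq> {}"
    and union_closed: "\<forall>x\<in>A. \<forall>y\<in>A. \<exists>z\<in>A. S x \<union> S y \<subseteq> S z"
  shows "\<exists>x\<in>A. \<forall>y\<in>A. S y \<subseteq> S x"
proof -
  have "card (S x) < Suc (card U)" if "x \<in> A" for x
    using card_mono[OF assms(1)] assms(2) that by (simp add: less_Suc_eq_le)
  moreover obtain x0 where "x0 \<in> A" using assms(3) by blast
  ultimately obtain x where x: "x \<in> A" "\<forall>y. y \<in> A \<longrightarrow> card (S y) \<le> card (S x)"
    using ex_has_greatest_nat[of "\<lambda>x. x \<in> A" x0 "\<lambda>x. card (S x)" "Suc (card U)"] by blast
  have "S y \<subseteq> S x" if "y \<in> A" for y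
  proof -
    obtain z where z: "z \<in> A" "S x \<union> S y \<subseteq> S z" using union_closed x(1) \<open>y \<in> A\<close> by blast
    have "finite (S z)" using assms(1,2) z(1) finite_subset by blast
    then have "S x = S z" using z x(2) by (intro card_seteq) auto
    then show ?thesis using z by blast
  qed
  then show ?thesis using x(1) by blast
qed

lemma eventually_at_right_mult_le:
  fixes \<alpha> \<beta> :: "'k \<Rightarrow> real"
  assumes "finite K" "\<forall>k\<in>K. 0 < \<beta> k"
  shows "eventually (\<lambda>\<delta>. \<forall>k\<in>K. \<delta> * \<alpha> k \<le> \<beta> k) (at_right 0)"
proof (rule eventually_ball_finite[OF assms(1)], rule ballI)
  fix k assume "k \<in> K"
  have "((\<lambda>\<delta>. \<delta> * \<alpha> k) \<longlongrightarrow> 0) (at_right 0)"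
    by (auto intro!: tendsto_eq_intros)
  then have "eventually (\<lambda>\<delta>. \<delta> * \<alpha> k < \<beta> k) (at_right 0)"
    using order_tendstoD(2) assms(2) \<open>k \<in> K\<close> by blast
  then show "eventually (\<lambda>\<delta>. \<delta> * \<alpha> k \<le> \<beta> k) (at_right 0)"
    by (rule eventually_mono) simp
qed

lemma mem_open_segment_extension:
  fixes a b :: "'n::real_vector"
  assumes "a \<noteq> b" "0 < \<delta>"
  shows "b \<in> open_segment a ((1 + \<delta>) *\<^sub>R b - \<delta> *\<^sub>R a)"
proof -
  define u where "u = 1 / (1 + \<delta>)"
  have u: "0 < u" "u < 1" "u * (1 + \<delta>) = 1" using assms(2) by (auto simp: u_def)
  have "(1 - u) *\<^sub>R a + u *\<^sub>R ((1 + \<delta>) *\<^sub>R b - \<delta> *\<^sub>R a)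
      = (1 - u * (1 + \<delta>)) *\<^sub>R a + (u * (1 + \<delta>)) *\<^sub>R b"
    by (simp add: algebra_simps)
  then have "b = (1 - u) *\<^sub>R a + u *\<^sub>R ((1 + \<delta>) *\<^sub>R b - \<delta> *\<^sub>R a)" using u(3) by simp
  moreover have "a \<noteq> (1 + \<delta>) *\<^sub>R b - \<delta> *\<^sub>R a"
  proof
    assume "a = (1 + \<delta>) *\<^sub>R b - \<delta> *\<^sub>R a"
    then have "(1 + \<delta>) *\<^sub>R a = (1 + \<delta>) *\<^sub>R b" by (simp add: algebra_simps)
    then show False using assms by simp
  qed
  ultimately show ?thesis unfolding in_segment using u by blast
qed

section \<open>Walks\<close>

fun walk :: "('a \<Rightarrow> 'v) \<Rightarrow> ('a \<Rightarrow> 'v) \<Rightarrow> 'a list \<Rightarrow> 'v \<Rightarrow> 'v \<Rightarrow> bool" where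
  "walk src tgt [] u v \<longleftrightarrow> u = v"
| "walk src tgt (a # as) u v \<longleftrightarrow> src a = u \<and> walk src tgt as (tgt a) v"

definition walk_vec :: "'a::finite list \<Rightarrow> real^'a" where
  "walk_vec as = (\<Sum>a\<leftarrow>as. axis a 1)"

lemma walk_append:
  "walk src tgt (as @ bs) u v \<longleftrightarrow> (\<exists>m. walk src tgt as u m \<and> walk src tgt bs m v)"
  by (induction as arbitrary: u) auto

lemma walk_hd_last:
  assumes "as \<noteq> []" "\<forall>k. Suc k < length as \<longrightarrow> tgt (as ! k) = src (as ! Suc k)"
  shows "walk src tgt as (src (hd as)) (tgt (last as))"
  using assms
proof (induction as)
  case Nil
  then show ?case by simp
next
  case (Cons a as)
  show ?case
  proof (cases "as = []")
    case True
    then show ?thesis by simp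
  next
    case False
    have "\<forall>k. Suc k < length as \<longrightarrow> tgt (as ! k) = src (as ! Suc k)"
      using Cons.prems(2) by (metis Suc_less_eq length_Cons nth_Cons_Suc)
    moreover have "tgt a = src (hd as)"
      using Cons.prems(2)[rule_format, of 0] False by (simp add: hd_conv_nth)
    ultimately show ?thesis using Cons.IH False by simp
  qed
qed

lemma walk_in_imp_walk: "walk_in src tgt S u v \<Longrightarrow> \<exists>as. walk src tgt as u v"
  unfolding walk_in_def by (metis walk_hd_last)

lemma walk_split_at:
  assumes "walk src tgt as u v" "i < length as"
  shows "walk src tgt (take i as) u (src (as ! i)) \<and> walk src tgt (drop i as) (src (as ! i)) v"
proof -
  obtain m where "walk src tgt (take i as) u m" "walk src tgt (drop i as) m v"
    using assms(1) walk_append[of src tgt "take i as" "drop i as"] by auto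
  moreover have "drop i as = as ! i # drop (Suc i) as"
    using assms(2) by (simp add: Cons_nth_drop_Suc)
  ultimately show ?thesis by auto
qed

lemma walk_vec_append: "walk_vec (as @ bs) = walk_vec as + walk_vec bs"
  by (simp add: walk_vec_def)

lemma nonneg_walk_vec: "nonneg (walk_vec as)"
proof (induction as)
  case Nil
  then show ?case by (simp add: walk_vec_def nonneg_def)
next
  case (Cons a as)
  then show ?case by (simp add: walk_vec_def nonneg_def axis_def)
qed

text \<open>A walk longer than the number of nodes revisits a node; cutting out the closed walk
  in between does not increase the (nonnegative) cost.\<close>
lemma short_walk_exists:
  fixes as :: "'a::finite list" and src tgt :: "'a \<Rightarrow> 'v::finite"
  assumes "walk src tgt as u v" "nonneg c"
  shows "\<exists>bs. walk src tgt bs u v \<and> length bs \<le> CARD('v) \<and> c \<bullet> walk_vec bs \<le> c \<bullet> walk_vec as"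
  using assms(1)
proof (induction "length as" arbitrary: as rule: less_induct)
  case less
  show ?case
  proof (cases "length as \<le> CARD('v)")
    case True
    then show ?thesis using less.prems by blast
  next
    case False
    have "card (set (map src as)) \<le> CARD('v)" by (rule card_mono) auto
    with False have "\<not> distinct (map src as)"
      using distinct_card by fastforce
    then obtain i j where ij: "i < j" "j < length as" "src (as ! i) = src (as ! j)"
      by (auto simp: distinct_conv_nth) (metis linorder_neqE_nat order.strict_trans)
    define bs where "bs = take i as @ drop j as"
    have "walk src tgt bs u v"
      unfolding bs_def walk_append
      using walk_split_at[OF less.prems, of i] walk_split_at[OF less.prems, of j] ij by auto
    moreover have "length bs < length as" unfolding bs_def using ij by auto
    moreover have "c \<bullet> walk_vec bs \<le> c \<bullet> walk_vec as"
    proof -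
      have "as = take i as @ take (j - i) (drop i as) @ drop j as"
        using ij by (metis append_take_drop_id drop_drop le_add_diff_inverse2 less_imp_le)
      then have "walk_vec as = walk_vec bs + walk_vec (take (j - i) (drop i as))"
        unfolding bs_def by (metis walk_vec_append add.assoc add.commute)
      then show ?thesis
        using nonneg_inner_nonneg[OF assms(2) nonneg_walk_vec] by (simp add: inner_add_right)
    qed
    ultimately show ?thesis using less.hyps by (meson order.trans)
  qed
qed

lemma incid_walk_vec:
  "walk src tgt as u v \<Longrightarrow> incid src tgt (walk_vec as) = axis u 1 - axis v 1"
proof (induction as arbitrary: u)
  case Nil
  then show ?case by (simp add: incid_def walk_vec_def vec_eq_iff)
next
  case (Cons a as)
  have "incid src tgt (walk_vec (a # as)) = incid src tgt (axis a 1) + incid src tgt (walk_vec as)"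
    by (simp add: incid_def walk_vec_def vec_eq_iff sum.distrib)
  also have "incid src tgt (axis a 1) = axis (src a) 1 - axis (tgt a) 1"
    by (simp add: incid_def vec_eq_iff axis_def)
  finally show ?case using Cons.IH[of "tgt a"] Cons.prems by simp
qed

lemma bvec_eq_axis: "orig \<noteq> dest \<Longrightarrow> bvec orig dest = axis orig 1 - axis dest 1"
  by (auto simp: bvec_def axis_def vec_eq_iff)

lemma inner_incid: "incid src tgt x \<bullet> y = (\<Sum>a\<in>UNIV. x $ a * (y $ src a - y $ tgt a))"
proof -
  have "incid src tgt x \<bullet> y = (\<Sum>i\<in>UNIV. \<Sum>a\<in>{a. src a = i}. x $ a * y $ src a)
      - (\<Sum>i\<in>UNIV. \<Sum>a\<in>{a. tgt a = i}. x $ a * y $ tgt a)"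
    by (simp add: inner_vec_def incid_def left_diff_distrib sum_distrib_right sum_subtractf)
  also have "\<dots> = (\<Sum>a\<in>UNIV. x $ a * y $ src a) - (\<Sum>a\<in>UNIV. x $ a * y $ tgt a)"
    using sum.group[of UNIV UNIV src "\<lambda>a. x $ a * y $ src a"]
      sum.group[of UNIV UNIV tgt "\<lambda>a. x $ a * y $ tgt a"] by simp
  finally show ?thesis by (simp add: right_diff_distrib sum_subtractf)
qed

lemma inner_tbar: "inj e \<Longrightarrow> tbar e t \<bullet> x = t \<bullet> restr e x"
proof -
  assume "inj e"
  have "tbar e t \<bullet> x = (\<Sum>a\<in>UNIV. if a \<in> range e then t $ inv e a * x $ a else 0)"
    by (auto simp: inner_vec_def tbar_def intro!: sum.cong)
  also have "\<dots> = (\<Sum>a\<in>range e. t $ inv e a * x $ a)"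
    by (simp add: sum.If_cases Int_absorb1)
  also have "\<dots> = (\<Sum>i\<in>UNIV. t $ i * x $ e i)"
    using \<open>inj e\<close> by (simp add: sum.reindex)
  finally show ?thesis by (simp add: inner_vec_def restr_def)
qed

section \<open>Shortest-walk potentials\<close>

definition short_walks :: "('a \<Rightarrow> 'v::finite) \<Rightarrow> ('a \<Rightarrow> 'v) \<Rightarrow> 'v \<Rightarrow> 'v \<Rightarrow> 'a list set" where
  "short_walks src tgt u v = {as. walk src tgt as u v \<and> length as \<le> CARD('v)}"

definition walk_cost_cap :: "real^'a::finite \<Rightarrow> nat \<Rightarrow> real" where
  "walk_cost_cap c n = Max ((\<lambda>as. c \<bullet> walk_vec as) ` {as. length as \<le> n})"

text \<open>The cap makes the potential finite at nodes from which \<open>v\<close> cannot be reached.\<close>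
definition potential ::
    "('a::finite \<Rightarrow> 'v::finite) \<Rightarrow> ('a \<Rightarrow> 'v) \<Rightarrow> real^'a \<Rightarrow> 'v \<Rightarrow> real^'v" where
  "potential src tgt c v = (\<chi> u. Min (insert (walk_cost_cap c CARD('v))
      ((\<lambda>as. c \<bullet> walk_vec as) ` short_walks src tgt u v)))"

lemma finite_lists_length_le_UNIV: "finite {as :: 'a::finite list. length as \<le> n}"
  using finite_lists_length_le[of "UNIV :: 'a set" n] by simp

lemma finite_short_walks: "finite (short_walks src tgt u v :: 'a::finite list set)"
  unfolding short_walks_def
  by (rule finite_subset[OF _ finite_lists_length_le_UNIV]) auto

lemma walk_cost_le_cap: "length as \<le> n \<Longrightarrow> c \<bullet> walk_vec as \<le> walk_cost_cap c n"
  unfolding walk_cost_cap_def by (rule Max_ge) (auto intro: finite_lists_length_le_UNIV)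

context
  fixes src tgt :: "'a::finite \<Rightarrow> 'v::finite" and c :: "real^'a" and v :: 'v
  assumes c_nonneg: "nonneg c"
begin

abbreviation pot :: "real^'v" where
  "pot \<equiv> potential src tgt c v"

private lemma finite_potential_candidates:
  "finite (insert (walk_cost_cap c CARD('v)) ((\<lambda>as. c \<bullet> walk_vec as) ` short_walks src tgt u v))"
  using finite_short_walks by blast

lemma potential_le_walk: "as \<in> short_walks src tgt u v \<Longrightarrow> pot $ u \<le> c \<bullet> walk_vec as"
  unfolding potential_def by (simp add: Min_le[OF finite_potential_candidates])

lemma potential_le_cap: "pot $ u \<le> walk_cost_cap c CARD('v)"
  unfolding potential_def by (simp add: Min_le[OF finite_potential_candidates])

lemma potential_cases:
  "pot $ u = walk_cost_cap c CARD('v) \<or> (\<exists>as\<in>short_walks src tgt u v. pot $ u = c \<bullet> walk_vec as)"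
  using Min_in[OF finite_potential_candidates] unfolding potential_def by auto

lemma potential_target: "pot $ v = 0"
proof -
  have "[] \<in> short_walks src tgt v v" by (simp add: short_walks_def)
  then have "pot $ v \<le> 0" using potential_le_walk[of "[]" v] by (simp add: walk_vec_def)
  moreover have "0 \<le> walk_cost_cap c CARD('v)"
    using walk_cost_le_cap[of "[]"] by (simp add: walk_vec_def)
  then have "0 \<le> pot $ v"
    using potential_cases[of v] nonneg_inner_nonneg[OF c_nonneg nonneg_walk_vec] by auto
  ultimately show ?thesis by simp
qed

lemma potential_arc: "pot $ src a \<le> c $ a + pot $ tgt a"
  using potential_cases[of "tgt a"]
proof
  assume "pot $ tgt a = walk_cost_cap c CARD('v)"
  then show ?thesis using potential_le_cap c_nonneg by (simp add: nonneg_def add_increasing)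
next
  assume "\<exists>as\<in>short_walks src tgt (tgt a) v. pot $ tgt a = c \<bullet> walk_vec as"
  then obtain as where as: "walk src tgt (a # as) (src a) v" "pot $ tgt a = c \<bullet> walk_vec as"
    by (auto simp: short_walks_def)
  obtain bs where "bs \<in> short_walks src tgt (src a) v"
    and "c \<bullet> walk_vec bs \<le> c \<bullet> walk_vec (a # as)"
    using short_walk_exists[OF as(1) c_nonneg] by (auto simp: short_walks_def)
  then show ?thesis
    using potential_le_walk as(2) by (fastforce simp: walk_vec_def inner_add_right inner_axis)
qed

lemma potential_attained:
  assumes "walk src tgt as u v"
  shows "\<exists>bs\<in>short_walks src tgt u v. pot $ u = c \<bullet> walk_vec bs"
proof -
  obtain bs where bs: "bs \<in> short_walks src tgt u v"
    using short_walk_exists[OF assms c_nonneg] by (auto simp: short_walks_def)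
  have "c \<bullet> walk_vec bs \<le> walk_cost_cap c CARD('v)"
    using bs walk_cost_le_cap[of bs "CARD('v)" c] by (simp add: short_walks_def)
  then show ?thesis
    using potential_cases[of u] potential_le_walk[OF bs] bs by force
qed

end

section \<open>The pricing problem and its LP duality\<close>

locale network =
  fixes src tgt :: "'a::finite \<Rightarrow> 'v::finite" and c :: "real^'a" and e :: "'t::finite \<Rightarrow> 'a"
    and orig dest :: 'v
  assumes inj_e: "inj e" and c_nonneg: "nonneg c" and orig_ne_dest: "orig \<noteq> dest"
    and orig_dest_walk: "\<exists>as. walk src tgt as orig dest"
begin

abbreviation "X \<equiv> Xset src tgt orig dest"
abbreviation "f \<equiv> fval src tgt c e orig dest"
abbreviation "primal_feas \<equiv> lpW_feas src tgt e orig dest"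
abbreviation "dual_feas \<equiv> lpT_feas src tgt c e"
abbreviation "W_of \<equiv> Wt src tgt c e orig dest"
abbreviation "T_of \<equiv> Tw src tgt c e orig dest"

definition toll_cost :: "real^'t \<Rightarrow> real^'a" where
  "toll_cost t = c + tbar e t"

definition paths :: "(real^'a) set" where
  "paths = walk_vec ` short_walks src tgt orig dest"

definition opt_paths :: "real^'t \<Rightarrow> (real^'a) set" where
  "opt_paths t = {p \<in> paths. toll_cost t \<bullet> p = f t}"

lemma inner_toll_cost: "toll_cost t \<bullet> x = c \<bullet> x + t \<bullet> restr e x"
  by (simp add: toll_cost_def inner_add_left inner_tbar[OF inj_e])

lemma inner_toll_cost_affine:
  assumes "u + v = 1"
  shows "toll_cost (u *\<^sub>R s + v *\<^sub>R t) \<bullet> p = u * (toll_cost s \<bullet> p) + v * (toll_cost t \<bullet> p)"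
proof -
  have "c \<bullet> p = u * (c \<bullet> p) + v * (c \<bullet> p)"
    using assms by (metis distrib_right mult_1)
  then show ?thesis
    unfolding inner_toll_cost inner_add_left inner_scaleR_left distrib_left by linarith
qed

lemma nonneg_toll_cost: "nonneg t \<Longrightarrow> nonneg (toll_cost t)"
  using c_nonneg by (auto simp: toll_cost_def tbar_def nonneg_def intro: add_nonneg_nonneg)

lemma paths_subset_X: "paths \<subseteq> X"
  using orig_ne_dest
  by (auto simp: paths_def short_walks_def Xset_def incid_walk_vec bvec_eq_axis nonneg_walk_vec)

lemma finite_paths: "finite paths"
  unfolding paths_def using finite_short_walks by blast

lemma weak_duality:
  assumes "dual_feas t y" "x \<in> X"
  shows "bvec orig dest \<bullet> y \<le> toll_cost t \<bullet> x"
proof -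
  have "bvec orig dest \<bullet> y = (\<Sum>a\<in>UNIV. x $ a * (y $ src a - y $ tgt a))"
    using assms(2) inner_incid[of src tgt x y] by (simp add: Xset_def)
  also have "\<dots> \<le> (\<Sum>a\<in>UNIV. x $ a * toll_cost t $ a)"
  proof (rule sum_mono)
    fix a
    have "y $ src a - y $ tgt a \<le> toll_cost t $ a"
      using assms(1) by (simp add: lpT_feas_def toll_cost_def algebra_simps)
    moreover have "0 \<le> x $ a" using assms(2) by (auto simp: Xset_def nonneg_def)
    ultimately show "x $ a * (y $ src a - y $ tgt a) \<le> x $ a * toll_cost t $ a"
      by (simp add: mult_left_mono)
  qed
  also have "\<dots> = toll_cost t \<bullet> x" by (simp add: inner_vec_def mult.commute)
  finally show ?thesis .
qed

lemma dual_value_eq_path_cost: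
  assumes "nonneg t"
  shows "\<exists>y. \<exists>p\<in>paths. dual_feas t y \<and> bvec orig dest \<bullet> y = toll_cost t \<bullet> p"
proof -
  define y where "y = potential src tgt (toll_cost t) dest"
  note cost_nonneg = nonneg_toll_cost[OF assms]
  have "dual_feas t y"
    unfolding lpT_feas_def
  proof (intro conjI allI assms)
    fix a
    show "y $ src a - y $ tgt a - tbar e t $ a \<le> c $ a"
      using potential_arc[OF cost_nonneg, of src tgt dest a] by (simp add: y_def toll_cost_def)
  qed
  moreover have "bvec orig dest \<bullet> y = y $ orig"
    using potential_target[OF cost_nonneg]
    by (simp add: y_def bvec_eq_axis[OF orig_ne_dest] inner_diff_left inner_axis')
  moreover obtain as where "walk src tgt as orig dest" using orig_dest_walk by blast
  then obtain bs where "bs \<in> short_walks src tgt orig dest" "y $ orig = toll_cost t \<bullet> walk_vec bs"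
    using potential_attained[OF cost_nonneg] unfolding y_def by blast
  ultimately show ?thesis
    unfolding paths_def by (intro exI[of _ y] bexI[of _ "walk_vec bs"]) auto
qed

lemma fval_attained:
  assumes "nonneg t"
  shows "\<exists>y. \<exists>p\<in>paths. dual_feas t y \<and> bvec orig dest \<bullet> y = f t \<and> f t = toll_cost t \<bullet> p"
proof -
  obtain y p where yp: "p \<in> paths" "dual_feas t y" "bvec orig dest \<bullet> y = toll_cost t \<bullet> p"
    using dual_value_eq_path_cost[OF assms] by blast
  have "{c \<bullet> x + t \<bullet> restr e x | x. x \<in> X} = (\<lambda>x. toll_cost t \<bullet> x) ` X"
    by (auto simp: inner_toll_cost)
  moreover have "toll_cost t \<bullet> p \<le> toll_cost t \<bullet> x" if "x \<in> X" for x
    using weak_duality[OF yp(2) that] yp(3) by simp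
  ultimately have "f t = toll_cost t \<bullet> p"
    unfolding fval_def using paths_subset_X yp(1) by (intro cInf_eq_minimum) auto
  then show ?thesis using yp by auto
qed

lemma fval_le: "nonneg t \<Longrightarrow> x \<in> X \<Longrightarrow> f t \<le> toll_cost t \<bullet> x"
  by (metis fval_attained weak_duality)

lemma opt_paths_nonempty: "nonneg t \<Longrightarrow> \<exists>p. p \<in> opt_paths t"
  by (metis (mono_tags, lifting) fval_attained mem_Collect_eq opt_paths_def)

lemma strong_duality: "nonneg t \<Longrightarrow> \<exists>y. dual_feas t y \<and> bvec orig dest \<bullet> y = f t"
  using fval_attained by blast

lemma dual_le_fval:
  assumes "dual_feas t y"
  shows "bvec orig dest \<bullet> y \<le> f t"
proof -
  have "nonneg t" using assms by (simp add: lpT_feas_def)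
  then obtain p where "p \<in> paths" "f t = toll_cost t \<bullet> p" using fval_attained by blast
  then show ?thesis using weak_duality[OF assms] paths_subset_X by auto
qed

lemma X_nonempty: "X \<noteq> {}"
  using opt_paths_nonempty[of 0] paths_subset_X by (auto simp: nonneg_def opt_paths_def)

lemma Wt_imp_Tw:
  assumes t: "nonneg t" and w: "w \<in> W_of t"
  shows "t \<in> T_of w"
proof -
  obtain x where x: "primal_feas w x"
    and opt: "\<forall>w' x'. primal_feas w' x' \<longrightarrow> c \<bullet> x + t \<bullet> w \<le> c \<bullet> x' + t \<bullet> w'"
    using w by (auto simp: Wt_def)
  obtain y where y: "dual_feas t y" "bvec orig dest \<bullet> y = f t"
    using strong_duality[OF t] by blast
  have xX: "x \<in> X" using x by (simp add: lpW_feas_def Xset_def)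
  have primal_le: "c \<bullet> x + t \<bullet> w \<le> f t"
    unfolding fval_def
  proof (rule cInf_greatest)
    show "{c \<bullet> x + t \<bullet> restr e x |x. x \<in> X} \<noteq> {}" using X_nonempty by simp
  next
    fix r assume "r \<in> {c \<bullet> x + t \<bullet> restr e x |x. x \<in> X}"
    then obtain x' where x': "x' \<in> X" "r = c \<bullet> x' + t \<bullet> restr e x'" by auto
    then have "primal_feas (restr e x') x'"
      by (auto simp: lpW_feas_def Xset_def restr_def nonneg_def)
    then show "c \<bullet> x + t \<bullet> w \<le> r" using opt x' by simp
  qed
  have dual_le: "bvec orig dest \<bullet> y' - w \<bullet> t' \<le> c \<bullet> x" if "dual_feas t' y'" for t' y'
  proof -
    have "bvec orig dest \<bullet> y' \<le> c \<bullet> x + t' \<bullet> restr e x"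
      using weak_duality[OF that xX] by (simp add: inner_toll_cost)
    also have "t' \<bullet> restr e x \<le> t' \<bullet> w"
      using that x by (intro nonneg_inner_mono) (auto simp: lpT_feas_def lpW_feas_def restr_def)
    finally show ?thesis by (simp add: inner_commute)
  qed
  have "bvec orig dest \<bullet> y' - w \<bullet> t' \<le> bvec orig dest \<bullet> y - w \<bullet> t"
    if "dual_feas t' y'" for t' y'
    using dual_le[OF that] primal_le y(2) inner_commute[of w t] by linarith
  then show ?thesis using y(1) unfolding Tw_def by blast
qed

lemma optimal_path_in_Wt:
  assumes p: "p \<in> opt_paths t" and t: "nonneg t"
    and w_ge: "\<forall>i. restr e p $ i \<le> w $ i" and tw: "t \<bullet> w = t \<bullet> restr e p"
  shows "w \<in> W_of t"
proof -
  have pX: "p \<in> X" using p paths_subset_X by (auto simp: opt_paths_def)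
  have "primal_feas w p"
    using pX w_ge by (auto simp: lpW_feas_def Xset_def nonneg_def restr_def intro: order_trans)
  moreover have "c \<bullet> p + t \<bullet> w \<le> c \<bullet> x' + t \<bullet> w'" if "primal_feas w' x'" for w' x'
  proof -
    have "c \<bullet> p + t \<bullet> w = f t" using p tw by (simp add: opt_paths_def inner_toll_cost)
    also have "\<dots> \<le> c \<bullet> x' + t \<bullet> restr e x'"
      using fval_le[OF t] that by (simp add: lpW_feas_def Xset_def inner_toll_cost)
    also have "t \<bullet> restr e x' \<le> t \<bullet> w'"
      using that t by (intro nonneg_inner_mono) (auto simp: lpW_feas_def restr_def)
    finally show ?thesis by simp
  qed
  ultimately show ?thesis by (auto simp: Wt_def)
qed

lemma Tw_nonneg: "s \<in> T_of w \<Longrightarrow> nonneg s"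
  by (auto simp: Tw_def lpT_feas_def)

lemma Tw_value_ge:
  assumes "s \<in> T_of w" "nonneg t"
  shows "f t - w \<bullet> t \<le> f s - w \<bullet> s"
proof -
  obtain y where y: "dual_feas s y"
    "\<forall>t' y'. dual_feas t' y' \<longrightarrow> bvec orig dest \<bullet> y' - w \<bullet> t' \<le> bvec orig dest \<bullet> y - w \<bullet> s"
    using assms(1) by (auto simp: Tw_def)
  obtain y' where y': "dual_feas t y'" "bvec orig dest \<bullet> y' = f t"
    using strong_duality[OF assms(2)] by blast
  show ?thesis using y(2)[rule_format, OF y'(1)] y'(2) dual_le_fval[OF y(1)] by linarith
qed

text \<open>Maximizing the support over a convex set of tolls picks a toll in its relative interior.\<close>
definition support :: "real^'t \<Rightarrow> ((real^'a) + 't) set" where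
  "support t = (paths - opt_paths t) <+> {i. t $ i \<noteq> 0}"

lemma support_subset_iff:
  "support s \<subseteq> support t \<longleftrightarrow> opt_paths t \<subseteq> opt_paths s \<and> (\<forall>i. t $ i = 0 \<longrightarrow> s $ i = 0)"
  by (auto simp: support_def opt_paths_def)

lemma support_subset_Plus: "support t \<subseteq> paths <+> UNIV"
  by (auto simp: support_def)

lemma optimal_path_on_extension:
  assumes t: "nonneg t" and st: "support s \<subseteq> support t" and p0: "p0 \<in> opt_paths t"
    and "0 \<le> \<delta>"
    and small_nonneg: "\<forall>i. t $ i \<noteq> 0 \<longrightarrow> \<delta> * (s $ i - t $ i) \<le> t $ i"
    and small_slack: "\<forall>p\<in>paths - opt_paths t.
      \<delta> * ((toll_cost s \<bullet> p - f s) - (toll_cost t \<bullet> p - f t)) \<le> toll_cost t \<bullet> p - f t"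
  defines "q \<equiv> (1 + \<delta>) *\<^sub>R t - \<delta> *\<^sub>R s"
  shows "nonneg q \<and> p0 \<in> opt_paths q"
proof -
  have opt_ts: "opt_paths t \<subseteq> opt_paths s" and zero_ts: "\<And>i. t $ i = 0 \<Longrightarrow> s $ i = 0"
    using st by (auto simp: support_subset_iff)
  have cost_q: "toll_cost q \<bullet> p = toll_cost t \<bullet> p + \<delta> * (toll_cost t \<bullet> p - toll_cost s \<bullet> p)" for p
    unfolding q_def using inner_toll_cost_affine[of "1 + \<delta>" "- \<delta>" t s p] by (simp add: algebra_simps)
  have q_nonneg: "nonneg q"
    unfolding nonneg_def
  proof
    fix i
    show "0 \<le> q $ i"
      using small_nonneg zero_ts[of i] t \<open>0 \<le> \<delta>\<close>
      by (cases "t $ i = 0") (auto simp: q_def nonneg_def algebra_simps)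
  qed
  have p0_st: "toll_cost s \<bullet> p0 = f s" "toll_cost t \<bullet> p0 = f t"
    using p0 opt_ts by (auto simp: opt_paths_def)
  have p0_min: "toll_cost q \<bullet> p0 \<le> toll_cost q \<bullet> p" if "p \<in> paths" for p
  proof (cases "p \<in> opt_paths t")
    case True
    then have "toll_cost s \<bullet> p = f s" "toll_cost t \<bullet> p = f t"
      using opt_ts by (auto simp: opt_paths_def)
    then show ?thesis using p0_st by (simp add: cost_q)
  next
    case False
    then show ?thesis using small_slack that p0_st by (simp add: cost_q algebra_simps)
  qed
  obtain p where p: "p \<in> opt_paths q" using opt_paths_nonempty[OF q_nonneg] by blast
  have "f q = toll_cost q \<bullet> p0"
  proof (rule antisym)
    show "f q \<le> toll_cost q \<bullet> p0"
      using fval_le[OF q_nonneg] p0 paths_subset_X by (auto simp: opt_paths_def)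
    show "toll_cost q \<bullet> p0 \<le> f q"
      using p0_min[of p] p by (auto simp: opt_paths_def)
  qed
  then show ?thesis using p0 q_nonneg by (simp add: opt_paths_def)
qed

lemma exists_extension_keeping_optimal_path:
  assumes t: "nonneg t" and st: "support s \<subseteq> support t" and p0: "p0 \<in> opt_paths t"
  shows "\<exists>\<delta>>0. nonneg ((1 + \<delta>) *\<^sub>R t - \<delta> *\<^sub>R s) \<and> p0 \<in> opt_paths ((1 + \<delta>) *\<^sub>R t - \<delta> *\<^sub>R s)"
proof -
  have "eventually (\<lambda>\<delta>. \<forall>i\<in>{i. t $ i \<noteq> 0}. \<delta> * (s $ i - t $ i) \<le> t $ i) (at_right 0)"
    using t by (intro eventually_at_right_mult_le) (auto simp: nonneg_def less_le)
  moreover have "eventually (\<lambda>\<delta>. \<forall>p\<in>paths - opt_paths t.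
      \<delta> * ((toll_cost s \<bullet> p - f s) - (toll_cost t \<bullet> p - f t)) \<le> toll_cost t \<bullet> p - f t) (at_right 0)"
    using fval_le[OF t] paths_subset_X finite_paths
    by (intro eventually_at_right_mult_le) (auto simp: opt_paths_def less_le)
  ultimately have "eventually (\<lambda>\<delta>. 0 < \<delta> \<and> (\<forall>i\<in>{i. t $ i \<noteq> 0}. \<delta> * (s $ i - t $ i) \<le> t $ i) \<and>
      (\<forall>p\<in>paths - opt_paths t.
         \<delta> * ((toll_cost s \<bullet> p - f s) - (toll_cost t \<bullet> p - f t)) \<le> toll_cost t \<bullet> p - f t)) (at_right 0)"
    using eventually_at_right_less by (intro eventually_conj)
  then obtain \<delta> where \<delta>: "0 < \<delta>" "\<forall>i. t $ i \<noteq> 0 \<longrightarrow> \<delta> * (s $ i - t $ i) \<le> t $ i"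
      "\<forall>p\<in>paths - opt_paths t.
         \<delta> * ((toll_cost s \<bullet> p - f s) - (toll_cost t \<bullet> p - f t)) \<le> toll_cost t \<bullet> p - f t"
    using eventually_happens'[OF trivial_limit_at_right_real] by force
  with optimal_path_on_extension[OF t st p0 less_imp_le[OF \<delta>(1)] \<delta>(2,3)] show ?thesis
    by blast
qed

end

section \<open>Action sets\<close>

locale action_face = network src tgt c e orig dest
  for src tgt :: "'a::finite \<Rightarrow> 'v::finite" and c and e :: "'t::finite \<Rightarrow> 'a" and orig dest +
  fixes F :: "((real^'t) \<times> real) set" and T :: "(real^'t) set"
  assumes face: "F face_of epi_negf src tgt c e orig dest"
    and F_nonempty: "F \<noteq> {}"
    and nonvertical: "((0::real^'t), (1::real)) \<notin> {u - v | u v. u \<in> affine hull F \<and> v \<in> affine hull F}"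
    and T_eq: "T = {t. \<exists>z. (t, z) \<in> F}"
begin

lemma F_on_graph: "(t, z) \<in> F \<Longrightarrow> nonneg t \<and> z = - f t"
  using face_of_epigraph_nonvertical[OF face[unfolded epi_negf_def] nonvertical]
    face_of_imp_subset[OF face]
  by (fastforce simp: epi_negf_def)

lemma mem_T_iff: "t \<in> T \<longleftrightarrow> (t, - f t) \<in> F"
  using F_on_graph unfolding T_eq by blast

lemma T_nonneg: "t \<in> T \<Longrightarrow> nonneg t"
  using F_on_graph unfolding T_eq by blast

lemma T_convex_comb:
  assumes "s \<in> T" "t \<in> T" "0 \<le> u" "u \<le> 1"
  shows "(1 - u) *\<^sub>R s + u *\<^sub>R t \<in> T \<and> f ((1 - u) *\<^sub>R s + u *\<^sub>R t) = (1 - u) * f s + u * f t"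
proof -
  have "(1 - u) *\<^sub>R (s, - f s) + u *\<^sub>R (t, - f t) \<in> F"
    using assms mem_T_iff by (intro convexD[OF face_of_imp_convex[OF face]]) auto
  then have "((1 - u) *\<^sub>R s + u *\<^sub>R t, - ((1 - u) * f s + u * f t)) \<in> F"
    by (simp add: algebra_simps)
  then show ?thesis using F_on_graph unfolding T_eq by fastforce
qed

lemma support_midpoint:
  assumes "s \<in> T" "t \<in> T"
  shows "support s \<union> support t \<subseteq> support ((1/2) *\<^sub>R s + (1/2) *\<^sub>R t)"
proof -
  define m where "m = (1/2) *\<^sub>R s + (1/2) *\<^sub>R t"
  have m: "m \<in> T" "f m = (f s + f t) / 2"
    using T_convex_comb[OF assms, of "1/2"] by (simp_all add: m_def)
  have "p \<in> opt_paths s \<and> p \<in> opt_paths t" if "p \<in> opt_paths m" for p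
  proof -
    have "toll_cost m \<bullet> p = (toll_cost s \<bullet> p + toll_cost t \<bullet> p) / 2"
      unfolding m_def by (subst inner_toll_cost_affine) auto
    moreover have "p \<in> paths" using that by (simp add: opt_paths_def)
    then have "f s \<le> toll_cost s \<bullet> p" "f t \<le> toll_cost t \<bullet> p"
      using fval_le T_nonneg assms paths_subset_X by blast+
    ultimately show ?thesis using that m(2) by (auto simp: opt_paths_def)
  qed
  moreover have "s $ i = 0 \<and> t $ i = 0" if "m $ i = 0" for i
  proof -
    have "0 \<le> s $ i" "0 \<le> t $ i" using T_nonneg assms by (auto simp: nonneg_def)
    moreover have "m $ i = s $ i / 2 + t $ i / 2" by (simp add: m_def)
    ultimately show ?thesis using that by linarith
  qed
  ultimately show ?thesis unfolding m_def[symmetric] by (auto simp: support_subset_iff)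
qed

lemma exists_max_support: "\<exists>t0\<in>T. \<forall>t\<in>T. support t \<subseteq> support t0"
proof (rule exists_greatest_union_closed)
  show "finite (paths <+> (UNIV :: 't set))" using finite_paths by simp
  show "\<forall>t\<in>T. support t \<subseteq> paths <+> UNIV" using support_subset_Plus by blast
  show "T \<noteq> {}" using F_nonempty T_eq by auto
  show "\<forall>s\<in>T. \<forall>t\<in>T. \<exists>m\<in>T. support s \<union> support t \<subseteq> support m"
  proof (intro ballI)
    fix s t assume "s \<in> T" "t \<in> T"
    then show "\<exists>m\<in>T. support s \<union> support t \<subseteq> support m"
      using support_midpoint[of s t] T_convex_comb[of s t "1/2"]
      by (intro bexI[of _ "(1/2) *\<^sub>R s + (1/2) *\<^sub>R t"]) auto
  qed
qed

lemma mem_T_if_open_segment: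
  assumes t0: "t0 \<in> T" and "nonneg s" "nonneg q" and seg: "t0 \<in> open_segment s q"
    and p: "p \<in> opt_paths s" "p \<in> opt_paths t0" "p \<in> opt_paths q"
  shows "s \<in> T"
proof -
  obtain u where u: "0 < u" "u < 1" "t0 = (1 - u) *\<^sub>R s + u *\<^sub>R q" and "s \<noteq> q"
    using seg unfolding in_segment by blast
  have "f t0 = toll_cost t0 \<bullet> p" using p(2) by (simp add: opt_paths_def)
  also have "\<dots> = (1 - u) * (toll_cost s \<bullet> p) + u * (toll_cost q \<bullet> p)"
    unfolding u(3) by (rule inner_toll_cost_affine) simp
  also have "\<dots> = (1 - u) * f s + u * f q" using p(1,3) by (simp add: opt_paths_def)
  finally have f_t0: "f t0 = (1 - u) * f s + u * f q" .
  have "(1 - u) *\<^sub>R (s, - f s) + u *\<^sub>R (q, - f q)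
      = ((1 - u) *\<^sub>R s + u *\<^sub>R q, - ((1 - u) * f s + u * f q))"
    by (simp add: algebra_simps)
  also have "\<dots> = (t0, - f t0)" by (simp only: f_t0 u(3)[symmetric])
  finally have "(t0, - f t0) \<in> open_segment (s, - f s) (q, - f q)"
    using u(1,2) \<open>s \<noteq> q\<close> unfolding in_segment by (intro conjI exI[of _ u]) auto
  moreover have "(s, - f s) \<in> epi_negf src tgt c e orig dest" "(q, - f q) \<in> epi_negf src tgt c e orig dest"
    using \<open>nonneg s\<close> \<open>nonneg q\<close> by (simp_all add: epi_negf_def)
  moreover have "(t0, - f t0) \<in> F" using t0 mem_T_iff by blast
  ultimately have "(s, - f s) \<in> F" using face_ofD[OF face] by blast
  then show ?thesis using mem_T_iff by blast
qed

lemma mem_T_if_support_subset: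
  assumes t0: "t0 \<in> T" and s: "nonneg s" "support s \<subseteq> support t0"
  shows "s \<in> T"
proof (cases "s = t0")
  case True
  then show ?thesis using t0 by simp
next
  case False
  obtain p0 where p0: "p0 \<in> opt_paths t0" using opt_paths_nonempty T_nonneg[OF t0] by blast
  then obtain \<delta> where "0 < \<delta>" and q: "nonneg ((1 + \<delta>) *\<^sub>R t0 - \<delta> *\<^sub>R s)"
    "p0 \<in> opt_paths ((1 + \<delta>) *\<^sub>R t0 - \<delta> *\<^sub>R s)"
    using exists_extension_keeping_optimal_path[OF T_nonneg[OF t0] s(2)] by blast
  moreover have "p0 \<in> opt_paths s" using s(2) p0 by (auto simp: support_subset_iff)
  ultimately show ?thesis
    using mem_T_if_open_segment[OF t0 s(1)] mem_open_segment_extension[OF False \<open>0 < \<delta>\<close>] p0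
    by blast
qed

context
  fixes t0 assumes t0: "t0 \<in> T" and t0_max: "\<forall>t\<in>T. support t \<subseteq> support t0"
begin

lemma max_support_path_in_W:
  assumes p: "p \<in> opt_paths t0"
    and w_ge: "\<forall>i. restr e p $ i \<le> w $ i" and w_eq: "\<forall>i. t0 $ i \<noteq> 0 \<longrightarrow> w $ i = restr e p $ i"
  shows "w \<in> (\<Inter>t\<in>T. W_of t)"
proof
  fix t assume t: "t \<in> T"
  then have opt: "opt_paths t0 \<subseteq> opt_paths t" and zeros: "\<forall>i. t0 $ i = 0 \<longrightarrow> t $ i = 0"
    using t0_max by (auto simp: support_subset_iff)
  have "t $ i * w $ i = t $ i * restr e p $ i" for i
    using w_eq zeros by (cases "t0 $ i = 0") auto
  then have "t \<bullet> w = t \<bullet> restr e p"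
    unfolding inner_vec_def inner_real_def by presburger
  then show "w \<in> W_of t" using optimal_path_in_Wt opt p T_nonneg[OF t] w_ge by blast
qed

lemma T_of_W_nonneg_support:
  assumes s: "s \<in> (\<Inter>w\<in>(\<Inter>t\<in>T. W_of t). T_of w)"
  shows "nonneg s \<and> support s \<subseteq> support t0"
proof -
  obtain p0 where p0: "p0 \<in> opt_paths t0" using opt_paths_nonempty T_nonneg[OF t0] by blast
  have value_ge: "f t0 - w \<bullet> t0 \<le> f s - w \<bullet> s" if "w \<in> (\<Inter>t\<in>T. W_of t)" for w
    using Tw_value_ge s that T_nonneg[OF t0] by blast
  have fval_t0: "f t0 = c \<bullet> p + t0 \<bullet> restr e p" if "p \<in> opt_paths t0" for p
    using that by (simp add: opt_paths_def inner_toll_cost)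
  have "restr e p0 \<in> (\<Inter>t\<in>T. W_of t)" by (rule max_support_path_in_W[OF p0]) auto
  then have s_nonneg: "nonneg s" using s Tw_nonneg by blast
  have fval_s: "f s \<le> c \<bullet> p + s \<bullet> restr e p" if "p \<in> opt_paths t0" for p
    using that fval_le[OF s_nonneg] paths_subset_X by (auto simp: opt_paths_def inner_toll_cost)
  have "p \<in> opt_paths s" if p: "p \<in> opt_paths t0" for p
  proof -
    have "restr e p \<in> (\<Inter>t\<in>T. W_of t)" by (rule max_support_path_in_W[OF p]) auto
    from value_ge[OF this] have "c \<bullet> p \<le> f s - s \<bullet> restr e p"
      using fval_t0[OF p] by (simp add: inner_commute)
    then have "f s = toll_cost s \<bullet> p"
      using fval_s[OF p] by (simp add: inner_toll_cost)
    then show ?thesis using p by (simp add: opt_paths_def)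
  qed
  moreover have "s $ i = 0" if "t0 $ i = 0" for i
  proof -
    define w where "w = restr e p0 + axis i 1"
    have "w \<in> (\<Inter>t\<in>T. W_of t)"
      using that by (intro max_support_path_in_W[OF p0]) (auto simp: w_def axis_def)
    from value_ge[OF this] have "c \<bullet> p0 \<le> f s - s \<bullet> restr e p0 - s $ i"
      using fval_t0[OF p0] that
      by (simp add: w_def inner_add_right inner_axis inner_commute)
    then have "s $ i \<le> 0" using fval_s[OF p0] by linarith
    then show ?thesis using s_nonneg by (simp add: nonneg_def antisym)
  qed
  ultimately show ?thesis using s_nonneg by (auto simp: support_subset_iff)
qed

end

lemma T_of_W_of_T: "(\<Inter>w\<in>(\<Inter>t\<in>T. W_of t). T_of w) = T"
proof
  show "T \<subseteq> (\<Inter>w\<in>(\<Inter>t\<in>T. W_of t). T_of w)"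
    using Wt_imp_Tw T_nonneg by blast
  show "(\<Inter>w\<in>(\<Inter>t\<in>T. W_of t). T_of w) \<subseteq> T"
  proof
    fix s assume s: "s \<in> (\<Inter>w\<in>(\<Inter>t\<in>T. W_of t). T_of w)"
    obtain t0 where t0: "t0 \<in> T" "\<forall>t\<in>T. support t \<subseteq> support t0"
      using exists_max_support by blast
    then show "s \<in> T"
      using T_of_W_nonneg_support[OF t0 s] mem_T_if_support_subset[OF t0(1)] by blast
  qed
qed

end

theorem proposition3:
  fixes src tgt :: "'a::finite \<Rightarrow> 'v::finite"
    and c :: "real^'a"
    and e :: "'t::finite \<Rightarrow> 'a"
    and orig dest :: 'v
    and T :: "(real^'t) set"
  assumes "inj e"
    and "range e \<noteq> UNIV"
    and "\<forall>a. 0 \<le> c $ a"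
    and "orig \<noteq> dest"
    and "walk_in src tgt (- range e) orig dest"
    and "action_set src tgt c e orig dest T"
  shows "(\<Inter>w\<in>(\<Inter>t\<in>T. Wt src tgt c e orig dest t). Tw src tgt c e orig dest w) = T"
proof -
  obtain F where "action_face src tgt c e orig dest F T"
    using assms walk_in_imp_walk[OF assms(5)]
    unfolding action_set_def action_face_def action_face_axioms_def network_def nonneg_def
    by blast
  then show ?thesis by (rule action_face.T_of_W_of_T)
qed

end
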